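(* For each real number $\epsilon>0$ and each integer $m\ge 3$ there is a positive integer $n$ and a subset $S\subseteq\mathbb{Z}/n\mathbb{Z}$ with $|S|\ge(1-\epsilon)n$ such that $S$ is simultaneously $(k,j)$-product-free for all positive integers $k>j$ with $k+j\le m$.
   Context: For positive integers $k,j$, a subset $S\subseteq\mathbb{Z}/n\mathbb{Z}$ is called $(k,j)$-product-free if there is no solution of $a_1a_2\cdots a_k\equiv b_1b_2\cdots b_j\pmod n$ with all $a_1,\dots,a_k,b_1,\dots,b_j\in S$ (not necessarily distinct). *)

theory Defs
  imports Complex_Main
begin

text \<open>Z/nZ is represented by residues {0..<n} (natural numbers); congruence mod n
is compared via mod n.\<close>

definition product_free :: "nat \<Rightarrow> nat \<Rightarrow> nat \<Rightarrow> nat set \<Rightarrow> bool" where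
  "product_free n k j S \<longleftrightarrow>
     (\<forall>as bs. length as = k \<longrightarrow> length bs = j \<longrightarrow> set as \<subseteq> S \<longrightarrow> set bs \<subseteq> S \<longrightarrow>
        prod_list as mod n \<noteq> prod_list bs mod n)"

end

theory Submission
  imports Defs "HOL-Analysis.Analysis"
begin

(* Fix a finite set P of large primes with \<mu> = (\<Sum>p\<in>P. 1/p) huge, let
   n = (\<Prod>p\<in>P. p^m), and let S consist of the residues x that are not divisible by p^2
   for any p \<in> P and whose number \<omega>(x) of prime divisors from P lies in the window
   [(1-\<delta>)\<mu>, (1+\<delta>)\<mu>], where \<delta> = 1/(2m+2).

   Density: \<omega> has mean \<mu> and variance at most \<mu> on {0..<n}, so by Chebyshev only a
   fraction 1/(\<delta>^2 \<mu>) of residues leaves the window; residues divisible by some p^2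
   form a fraction at most \<Sum> 1/p^2, which is small because all p are large.  The
   existence of P rests on the divergence of \<Sum> 1/p, derived from harm N \<le> exp (2 \<Sum>_{p\<le>N} 1/p).

   Product-freeness: a product of fewer than m elements of S has p-adic valuation < m for
   each p \<in> P, and these valuations are determined by the residue modulo p^m.  So
   a_1\<cdots>a_k \<equiv> b_1\<cdots>b_j (mod n) forces \<Sum> \<omega>(a_i) = \<Sum> \<omega>(b_i), impossible since
   k(1-\<delta>)\<mu> > j(1+\<delta>)\<mu> whenever k > j and k + j \<le> m. *)


subsection \<open>Divergence of the sum of prime reciprocals\<close>

lemma prime_factorisation_up_to:
  fixes n N :: nat
  assumes "1 \<le> n" "n \<le> N"
  shows "n = (\<Prod>p\<in>{p. prime p \<and> p \<le> N}. p ^ multiplicity p n)"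
proof -
  have sub: "prime_factors n \<subseteq> {p. prime p \<and> p \<le> N}"
  proof
    fix p assume "p \<in> prime_factors n"
    then have "prime p" "p dvd n" by (auto simp: in_prime_factors_iff)
    then have "p \<le> n" using assms dvd_imp_le by auto
    then show "p \<in> {p. prime p \<and> p \<le> N}" using \<open>prime p\<close> assms by auto
  qed
  have trivial_factors: "p ^ multiplicity p n = 1" if "p \<in> {p. prime p \<and> p \<le> N} - prime_factors n" for p
  proof -
    have "\<not> p dvd n" using that assms by (auto simp: in_prime_factors_iff)
    then show ?thesis by (simp add: not_dvd_imp_multiplicity_0)
  qed
  have "n = (\<Prod>p\<in>prime_factors n. p ^ multiplicity p n)"
    using prod_prime_factors[of n] assms by simp
  also have "\<dots> = (\<Prod>p\<in>{p. prime p \<and> p \<le> N}. p ^ multiplicity p n)"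
    using trivial_factors by (intro prod.mono_neutral_left[OF _ sub]) auto
  finally show ?thesis .
qed

lemma multiplicity_le_self:
  fixes p n :: nat
  assumes "prime p" "n \<ge> 1"
  shows "multiplicity p n \<le> n"
proof -
  have "multiplicity p n < 2 ^ multiplicity p n" by (rule less_exp)
  also have "\<dots> \<le> p ^ multiplicity p n"
    using prime_ge_2_nat[OF assms(1)] by (simp add: power_mono)
  also have "\<dots> \<le> n"
    using multiplicity_dvd[of p n] assms dvd_imp_le by auto
  finally show ?thesis by simp
qed

text \<open>Euler's argument: expanding the truncated Euler product covers every 1/n with n \<le> N,
  because n is determined by its exponent vector, whose entries are at most N.\<close>
lemma harm_le_euler_product:
  fixes N :: nat
  shows "harm N \<le> (\<Prod>p\<in>{p. prime p \<and> p \<le> N}. \<Sum>a\<in>{0..N}. (1 / real p) ^ a)"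
proof -
  define Pr where "Pr = {p. prime p \<and> p \<le> N}"
  have fin: "finite Pr" unfolding Pr_def by simp
  define F where "F n = restrict (\<lambda>p. multiplicity p n) Pr" for n :: nat
  have rep: "n = (\<Prod>p\<in>Pr. p ^ F n p)" if "n \<in> {1..N}" for n
    using prime_factorisation_up_to[of n N] that unfolding Pr_def F_def by auto
  have inv: "inverse (real n) = (\<Prod>p\<in>Pr. (1 / real p) ^ F n p)" if "n \<in> {1..N}" for n
  proof -
    have "real n = (\<Prod>p\<in>Pr. real p ^ F n p)"
      by (subst rep[OF that]) (simp add: of_nat_prod)
    then have "inverse (real n) = (\<Prod>p\<in>Pr. inverse (real p ^ F n p))"
      by (simp add: prod_inversef[symmetric, unfolded comp_def])
    then show ?thesis by (simp add: power_one_over inverse_eq_divide)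
  qed
  have inj: "inj_on F {1..N}"
  proof
    fix x y assume "x \<in> {1..N}" "y \<in> {1..N}" "F x = F y"
    then show "x = y" using rep by metis
  qed
  have range: "F ` {1..N} \<subseteq> PiE Pr (\<lambda>_. {0..N})"
  proof
    fix g assume "g \<in> F ` {1..N}"
    then obtain n where n: "n \<in> {1..N}" "g = F n" by auto
    have "multiplicity p n \<le> N" if "p \<in> Pr" for p
      using multiplicity_le_self[of p n] that n(1) unfolding Pr_def by auto
    then show "g \<in> PiE Pr (\<lambda>_. {0..N})" using n unfolding F_def by auto
  qed
  have "harm N = (\<Sum>n\<in>{1..N}. \<Prod>p\<in>Pr. (1 / real p) ^ F n p)"
    unfolding harm_def using inv by (intro sum.cong) auto
  also have "\<dots> = (\<Sum>g\<in>F ` {1..N}. \<Prod>p\<in>Pr. (1 / real p) ^ g p)"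
    by (subst sum.reindex[OF inj]) simp
  also have "\<dots> \<le> (\<Sum>g\<in>PiE Pr (\<lambda>_. {0..N}). \<Prod>p\<in>Pr. (1 / real p) ^ g p)"
    by (rule sum_mono2[OF finite_PiE[OF fin] range]) (auto intro!: prod_nonneg)
  also have "\<dots> = (\<Prod>p\<in>Pr. \<Sum>a\<in>{0..N}. (1 / real p) ^ a)"
    by (rule prod_sum_PiE[symmetric]) (auto simp: fin)
  finally show ?thesis unfolding Pr_def .
qed

text \<open>Each Euler factor is at most 1 + 2/p \<le> exp (2/p).\<close>
lemma geometric_sum_le_exp:
  fixes p N :: nat
  assumes "p \<ge> 2"
  shows "(\<Sum>a\<in>{0..N}. (1 / real p) ^ a) \<le> exp (2 / real p)"
proof -
  have q: "0 \<le> 1 / real p" "1 / real p < 1" "1 / real p \<noteq> 1" using assms by auto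
  have "(\<Sum>a\<in>{0..N}. (1 / real p) ^ a) = (\<Sum>a<Suc N. (1 / real p) ^ a)"
    by (rule sum.cong) auto
  also have "\<dots> = (1 - (1 / real p) ^ Suc N) / (1 - 1 / real p)"
    using sum_gp_strict[of "1 / real p" "Suc N"] q by simp
  also have "\<dots> \<le> 1 / (1 - 1 / real p)"
    using q by (intro divide_right_mono) auto
  also have "\<dots> \<le> 1 + 2 / real p" using assms by (simp add: field_simps)
  also have "\<dots> \<le> exp (2 / real p)" using exp_ge_add_one_self[of "2 / real p"] by simp
  finally show ?thesis .
qed

text \<open>Since harm N \<ge> ln (N + 1), this forces \<Sum>_{p\<le>N} 1/p \<ge> ln ln (N + 1) / 2.\<close>
lemma harm_le_exp_prime_reciprocals:
  fixes N :: nat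
  shows "harm N \<le> exp (2 * (\<Sum>p\<in>{p. prime p \<and> p \<le> N}. 1 / real p))"
proof -
  have "harm N \<le> (\<Prod>p\<in>{p. prime p \<and> p \<le> N}. exp (2 / real p))"
    using harm_le_euler_product[of N]
    by (rule order.trans)
       (intro prod_mono conjI sum_nonneg geometric_sum_le_exp, auto simp: prime_ge_2_nat)
  also have "\<dots> = exp (2 * (\<Sum>p\<in>{p. prime p \<and> p \<le> N}. 1 / real p))"
    by (simp add: exp_sum[symmetric] sum_distrib_left)
  finally show ?thesis .
qed

lemma large_primes_reciprocal_sum:
  fixes M :: nat and C :: real
  shows "\<exists>P. finite P \<and> (\<forall>p\<in>P. prime p \<and> M < p) \<and> C \<le> (\<Sum>p\<in>P. 1 / real p)"
proof -
  define K where "K = 2 * (\<bar>C\<bar> + real M)"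
  define N where "N = nat \<lceil>exp (exp K)\<rceil>"
  define Pr where "Pr = {p. prime p \<and> p \<le> N}"
  define P where "P = {p\<in>Pr. M < p}"
  have "exp K \<le> ln (real N + 1)"
    unfolding N_def by (smt (verit) exp_gt_zero ln_exp ln_le_cancel_iff of_nat_ceiling)
  also have "\<dots> \<le> exp (2 * (\<Sum>p\<in>Pr. 1 / real p))"
    using harm_ge_ln[of N] harm_le_exp_prime_reciprocals[of N] unfolding Pr_def by linarith
  finally have big: "\<bar>C\<bar> + real M \<le> (\<Sum>p\<in>Pr. 1 / real p)" unfolding K_def by simp
  have "(\<Sum>p\<in>Pr - P. 1 / real p) \<le> (\<Sum>p\<in>Pr - P. 1)"
    by (intro sum_mono) (auto simp: Pr_def dest: prime_ge_1_nat)
  also have "\<dots> = real (card (Pr - P))" by simp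
  also have "\<dots> \<le> real (card {1..M})"
    by (intro of_nat_mono card_mono) (auto simp: Pr_def P_def dest: prime_ge_1_nat)
  finally have small: "(\<Sum>p\<in>Pr - P. 1 / real p) \<le> real M" by simp
  have "(\<Sum>p\<in>Pr. 1 / real p) = (\<Sum>p\<in>Pr - P. 1 / real p) + (\<Sum>p\<in>P. 1 / real p)"
    by (rule sum.subset_diff) (auto simp: Pr_def P_def)
  then have "C \<le> (\<Sum>p\<in>P. 1 / real p)" using big small by linarith
  moreover have "finite P" "\<forall>p\<in>P. prime p \<and> M < p" by (auto simp: P_def Pr_def)
  ultimately show ?thesis by blast
qed

lemma telescoping_inverse_squares:
  fixes M :: nat
  assumes "M \<ge> 1"
  shows "(\<Sum>k\<in>{M<..M+i}. 1 / (real k)^2) \<le> 1 / real M - 1 / real (M + i)"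
proof (induction i)
  case 0 then show ?case by simp
next
  case (Suc i)
  define a where "a = real (M + i)"
  have a: "a \<ge> 1" using assms unfolding a_def by simp
  have "1 / (a + 1)^2 \<le> 1 / (a * (a + 1))"
    using a by (intro divide_left_mono) (auto simp: power2_eq_square)
  also have "\<dots> = 1 / a - 1 / (a + 1)" using a by (simp add: field_simps)
  finally have step: "1 / (a + 1)^2 \<le> 1 / a - 1 / (a + 1)" .
  have "{M<..M + Suc i} = insert (M + Suc i) {M<..M+i}" by auto
  then show ?case using Suc step by (simp add: a_def add.commute)
qed

text \<open>Bounds the proportion of residues divisible by the square of some p \<in> P.\<close>
lemma inverse_squares_above:
  fixes M :: nat and P :: "nat set"
  assumes "M \<ge> 1" "finite P" "\<forall>p\<in>P. M < p"
  shows "(\<Sum>p\<in>P. 1 / (real p)^2) \<le> 1 / real M"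
proof -
  have "P \<subseteq> {M<..M + \<Sum>P}"
    using assms member_le_sum[of _ P id] by fastforce
  then have "(\<Sum>p\<in>P. 1 / (real p)^2) \<le> (\<Sum>k\<in>{M<..M+\<Sum>P}. 1 / (real k)^2)"
    by (intro sum_mono2) auto
  also have "\<dots> \<le> 1 / real M - 1 / real (M + \<Sum>P)" by (rule telescoping_inverse_squares[OF assms(1)])
  also have "\<dots> \<le> 1 / real M" by (simp add: sum_nonneg)
  finally show ?thesis .
qed


subsection \<open>The number of prime divisors from P on a period\<close>

text \<open>The number \<omega>(x) of primes of P dividing x, and its mean value \<mu> = \<Sum>_{p\<in>P} 1/p.\<close>
definition prime_divisor_count :: "nat set \<Rightarrow> nat \<Rightarrow> real" where
  "prime_divisor_count P x = (\<Sum>p\<in>P. if p dvd x then 1 else 0)"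

definition reciprocal_sum :: "nat set \<Rightarrow> real" where
  "reciprocal_sum P = (\<Sum>p\<in>P. 1 / real p)"

definition typical_residues :: "nat set \<Rightarrow> nat \<Rightarrow> real \<Rightarrow> nat set" where
  "typical_residues P n \<delta> = {x\<in>{0..<n}. (\<forall>p\<in>P. \<not> p^2 dvd x) \<and>
     \<bar>prime_divisor_count P x - reciprocal_sum P\<bar> \<le> \<delta> * reciprocal_sum P}"

lemma card_multiples:
  fixes d n :: nat
  assumes "0 < d" "d dvd n"
  shows "card {x\<in>{0..<n}. d dvd x} = n div d"
proof -
  have "{x\<in>{0..<n}. d dvd x} = (\<lambda>i. d * i) ` {0..<n div d}"
    using assms by (auto elim!: dvdE simp: dvd_div_mult_self mult.commute[of d]
                        less_mult_imp_div_less intro!: image_eqI)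
  then show ?thesis using assms by (simp add: card_image inj_on_def)
qed

lemma sum_divisibility_indicator:
  fixes d n :: nat
  assumes "0 < d" "d dvd n"
  shows "(\<Sum>x\<in>{0..<n}. if d dvd x then 1 else 0 :: real) = real n / real d"
proof -
  have "(\<Sum>x\<in>{0..<n}. if d dvd x then 1 else 0 :: real) = (\<Sum>x\<in>{x\<in>{0..<n}. d dvd x}. 1)"
    by (rule sum.inter_filter[symmetric]) simp
  also have "\<dots> = real (n div d)" using card_multiples[OF assms] by simp
  finally show ?thesis using assms by (simp add: real_of_nat_div)
qed

text \<open>When n is divisible by p^2 and p q for all p \<noteq> q in P, the residues modulo n
  behave like a probability space on which the events p | x are independent with
  probability 1/p; this yields the mean and a variance bound for the divisor count.\<close>
locale divisor_moments =
  fixes P :: "nat set" and n :: nat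
  assumes finP: "finite P" and primeP: "\<And>p. p \<in> P \<Longrightarrow> prime p"
    and sq_dvd: "\<And>p. p \<in> P \<Longrightarrow> p^2 dvd n"
    and pair_dvd: "\<And>p q. p \<in> P \<Longrightarrow> q \<in> P \<Longrightarrow> p \<noteq> q \<Longrightarrow> p * q dvd n"
begin

abbreviation "\<omega> \<equiv> prime_divisor_count P"
abbreviation "\<mu> \<equiv> reciprocal_sum P"

lemma pos: "p \<in> P \<Longrightarrow> 0 < p"
  using primeP prime_gt_0_nat by blast

lemma prime_dvd: "p \<in> P \<Longrightarrow> p dvd n"
  using sq_dvd by (metis dvd_power dvd_trans zero_less_numeral)

text \<open>Each p \<in> P divides exactly n/p residues, so \<omega> has mean \<mu>.\<close>
lemma first_moment: "(\<Sum>x\<in>{0..<n}. \<omega> x) = real n * \<mu>"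
proof -
  have "(\<Sum>x\<in>{0..<n}. \<omega> x) = (\<Sum>p\<in>P. \<Sum>x\<in>{0..<n}. if p dvd x then 1 else 0)"
    unfolding prime_divisor_count_def by (rule sum.swap)
  also have "\<dots> = (\<Sum>p\<in>P. real n / real p)"
    by (intro sum.cong refl sum_divisibility_indicator pos prime_dvd)
  finally show ?thesis by (simp add: reciprocal_sum_def sum_distrib_left)
qed

lemma joint_count:
  assumes "p \<in> P" "q \<in> P"
  shows "(\<Sum>x\<in>{0..<n}. (if p dvd x then 1 else 0) * (if q dvd x then 1 else 0 :: real))
     = real n / real p * (1 / real q) + (if p = q then real n / real p * (1 - 1 / real p) else 0)"
proof (cases "p = q")
  case True
  then show ?thesis
    using sum_divisibility_indicator[OF pos prime_dvd, OF assms(1)] assms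
    by (simp add: if_distrib algebra_simps cong: if_cong)
next
  case False
  have "coprime p q" using False assms primeP by (simp add: primes_coprime)
  then have "p * q dvd x \<longleftrightarrow> p dvd x \<and> q dvd x" for x
    by (meson divides_mult dvd_mult_left dvd_mult_right)
  then have "(\<Sum>x\<in>{0..<n}. (if p dvd x then 1 else 0) * (if q dvd x then 1 else 0 :: real))
      = (\<Sum>x\<in>{0..<n}. if p * q dvd x then 1 else 0)"
    by (intro sum.cong) auto
  also have "\<dots> = real n / real (p * q)"
    using assms False by (intro sum_divisibility_indicator pair_dvd) (auto simp: pos)
  finally show ?thesis using False by simp
qed

text \<open>Summing the joint counts over all pairs (p, q): the second moment exceeds \<mu>^2 by at most \<mu>.\<close>
lemma second_moment: "(\<Sum>x\<in>{0..<n}. (\<omega> x)^2) \<le> real n * \<mu>^2 + real n * \<mu>"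
proof -
  define I where "I p x = (if p dvd x then 1 else (0::real))" for p x :: nat
  define E where "E p = real n / real p * (1 - 1 / real p)" for p :: nat
  have n_mu: "(\<Sum>p\<in>P. real n / real p) = real n * \<mu>"
    by (simp add: reciprocal_sum_def sum_distrib_left)
  have "(\<Sum>x\<in>{0..<n}. (\<omega> x)^2) = (\<Sum>p\<in>P. \<Sum>q\<in>P. \<Sum>x\<in>{0..<n}. I p x * I q x)"
    unfolding prime_divisor_count_def I_def power2_eq_square sum_product
    by (subst sum.swap) (simp add: sum.swap[of _ "{0..<n}"])
  also have "\<dots> = (\<Sum>p\<in>P. \<Sum>q\<in>P. real n / real p * (1 / real q) + (if p = q then E p else 0))"
    unfolding I_def E_def by (intro sum.cong refl joint_count)
  also have "\<dots> = (\<Sum>p\<in>P. \<Sum>q\<in>P. real n / real p * (1 / real q)) + (\<Sum>p\<in>P. E p)"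
    by (simp add: sum.distrib finP)
  also have "(\<Sum>p\<in>P. \<Sum>q\<in>P. real n / real p * (1 / real q)) = (\<Sum>p\<in>P. real n / real p) * \<mu>"
    by (simp only: reciprocal_sum_def sum_product)
  also have "(\<Sum>p\<in>P. E p) \<le> (\<Sum>p\<in>P. real n / real p)"
    unfolding E_def by (intro sum_mono mult_left_le) auto
  finally show ?thesis by (simp add: n_mu power2_eq_square)
qed

lemma variance: "(\<Sum>x\<in>{0..<n}. (\<omega> x - \<mu>)^2) \<le> real n * \<mu>"
proof -
  have "(\<Sum>x\<in>{0..<n}. (\<omega> x - \<mu>)^2)
      = (\<Sum>x\<in>{0..<n}. (\<omega> x)^2) - 2 * \<mu> * (\<Sum>x\<in>{0..<n}. \<omega> x) + real n * \<mu>^2"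
    by (simp add: power2_diff sum.distrib sum_subtractf sum_distrib_left mult.commute mult.left_commute)
  also have "\<dots> \<le> real n * \<mu>" using second_moment first_moment
    by (simp add: power2_eq_square algebra_simps)
  finally show ?thesis .
qed

lemma chebyshev:
  assumes "t > 0"
  shows "real (card {x\<in>{0..<n}. t < \<bar>\<omega> x - \<mu>\<bar>}) * t^2 \<le> real n * \<mu>"
proof -
  let ?B = "{x\<in>{0..<n}. t < \<bar>\<omega> x - \<mu>\<bar>}"
  have "real (card ?B) * t^2 = (\<Sum>x\<in>?B. t^2)" by simp
  also have "\<dots> \<le> (\<Sum>x\<in>?B. (\<omega> x - \<mu>)^2)"
    using assms by (intro sum_mono) (metis (mono_tags) abs_le_square_iff
                     abs_of_pos less_imp_le mem_Collect_eq)
  also have "\<dots> \<le> (\<Sum>x\<in>{0..<n}. (\<omega> x - \<mu>)^2)" by (rule sum_mono2) auto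
  also have "\<dots> \<le> real n * \<mu>" by (rule variance)
  finally show ?thesis .
qed

lemma squareful_count:
  "real (card {x\<in>{0..<n}. \<exists>p\<in>P. p^2 dvd x}) \<le> real n * (\<Sum>p\<in>P. 1 / (real p)^2)"
proof -
  have "{x\<in>{0..<n}. \<exists>p\<in>P. p^2 dvd x} = (\<Union>p\<in>P. {x\<in>{0..<n}. p^2 dvd x})" by auto
  then have "card {x\<in>{0..<n}. \<exists>p\<in>P. p^2 dvd x} \<le> (\<Sum>p\<in>P. card {x\<in>{0..<n}. p^2 dvd x})"
    using card_UN_le[OF finP] by simp
  also have "\<dots> = (\<Sum>p\<in>P. n div p^2)"
    by (intro sum.cong refl card_multiples sq_dvd) (auto simp: pos)
  finally have "real (card {x\<in>{0..<n}. \<exists>p\<in>P. p^2 dvd x}) \<le> (\<Sum>p\<in>P. real (n div p^2))"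
    by (simp only: of_nat_le_iff of_nat_sum[symmetric])
  also have "\<dots> = real n * (\<Sum>p\<in>P. 1 / (real p)^2)"
    by (simp add: sum_distrib_left real_of_nat_div sq_dvd)
  finally show ?thesis .
qed

text \<open>All residues except the squareful ones and the Chebyshev outliers are typical.\<close>
lemma card_typical_residues:
  assumes "\<delta> > 0" "\<mu> > 0"
  shows "real n - real n * (\<Sum>p\<in>P. 1 / (real p)^2) - real n / (\<delta>^2 * \<mu>)
           \<le> real (card (typical_residues P n \<delta>))"
proof -
  define T where "T = typical_residues P n \<delta>"
  define Q where "Q = {x\<in>{0..<n}. \<exists>p\<in>P. p^2 dvd x}"
  define B where "B = {x\<in>{0..<n}. \<delta> * \<mu> < \<bar>\<omega> x - \<mu>\<bar>}"
  have "{0..<n} \<subseteq> T \<union> Q \<union> B" unfolding T_def Q_def B_def typical_residues_def by auto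
  then have "n \<le> card (T \<union> Q \<union> B)"
    using card_mono[of "T \<union> Q \<union> B" "{0..<n}"] by (simp add: T_def Q_def B_def typical_residues_def)
  also have "\<dots> \<le> card T + card Q + card B"
    using card_Un_le[of "T \<union> Q" B] card_Un_le[of T Q] by linarith
  finally have cover: "real n \<le> real (card T) + real (card Q) + real (card B)" by linarith
  have "real (card B) * (\<delta>^2 * \<mu>) * \<mu> \<le> real n * \<mu>"
    using chebyshev[of "\<delta> * \<mu>"] assms unfolding B_def by (simp add: power_mult_distrib power2_eq_square mult.assoc)
  then have "real (card B) \<le> real n / (\<delta>^2 * \<mu>)"
    using assms by (simp add: field_simps)
  then show ?thesis using cover squareful_count unfolding Q_def T_def by linarith
qed

end

lemma divisor_moments_prime_powers:
  assumes "finite P" "\<forall>p\<in>P. prime p" "m \<ge> 2"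
  shows "divisor_moments P (\<Prod>p\<in>P. p ^ m)"
proof
  fix p q assume p: "p \<in> P"
  show "p^2 dvd (\<Prod>p\<in>P. p ^ m)"
    using assms p by (meson dvd_prodI dvd_trans le_imp_power_dvd)
  assume "q \<in> P" "p \<noteq> q"
  then have "p ^ m * q ^ m dvd (\<Prod>p\<in>P. p ^ m)"
    using prod_dvd_prod_subset[OF assms(1), of "{p, q}" "\<lambda>p. p ^ m"] p by simp
  moreover have "p * q dvd p ^ m * q ^ m" using assms(3)
    by (intro mult_dvd_mono) (auto intro: dvd_power)
  ultimately show "p * q dvd (\<Prod>p\<in>P. p ^ m)" by (rule dvd_trans[rotated])
qed (use assms in auto)

text \<open>For every \<epsilon>, \<delta> > 0 some set P makes the typical residues a (1 - \<epsilon>)-fraction: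
  choose the primes above 2/\<epsilon> and with \<mu> \<ge> 2/(\<delta>^2 \<epsilon>).\<close>
lemma exists_dense_typical_residues:
  fixes \<epsilon> \<delta> :: real and m :: nat
  assumes "\<epsilon> > 0" "\<delta> > 0" "m \<ge> 2"
  shows "\<exists>P. finite P \<and> P \<noteq> {} \<and> (\<forall>p\<in>P. prime p) \<and> reciprocal_sum P > 0 \<and>
     (1 - \<epsilon>) * real (\<Prod>p\<in>P. p ^ m) \<le> real (card (typical_residues P (\<Prod>p\<in>P. p ^ m) \<delta>))"
proof -
  define M :: nat where "M = nat \<lceil>2 / \<epsilon>\<rceil> + 1"
  have M1: "M \<ge> 1" by (simp add: M_def)
  have "2 / \<epsilon> \<le> real M" unfolding M_def by linarith
  then have M2: "1 / real M \<le> \<epsilon> / 2" using assms(1) M1 by (simp add: field_simps)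
  obtain P where P: "finite P" "\<forall>p\<in>P. prime p \<and> M < p"
    and PC: "2 / (\<delta>^2 * \<epsilon>) \<le> reciprocal_sum P"
    using large_primes_reciprocal_sum[of M "2 / (\<delta>^2 * \<epsilon>)"]
    unfolding reciprocal_sum_def by blast
  define n where "n = (\<Prod>p\<in>P. p ^ m)"
  have "0 < 2 / (\<delta>^2 * \<epsilon>)" using assms by simp
  then have mu: "reciprocal_sum P > 0" using PC by linarith
  then have "P \<noteq> {}" by (auto simp: reciprocal_sum_def)
  interpret divisor_moments P n
    unfolding n_def using divisor_moments_prime_powers P assms(3) by blast
  have squareful: "real n * (\<Sum>p\<in>P. 1 / (real p)^2) \<le> real n * (\<epsilon> / 2)"
    using inverse_squares_above[OF M1 P(1)] P(2) M2 by (intro mult_left_mono) auto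
  have "1 / (\<delta>^2 * reciprocal_sum P) \<le> \<epsilon> / 2"
    using PC assms mu by (simp add: field_simps)
  then have outliers: "real n / (\<delta>^2 * reciprocal_sum P) \<le> real n * (\<epsilon> / 2)"
    using mult_left_mono[of _ _ "real n"] by fastforce
  have "(1 - \<epsilon>) * real n = real n - real n * (\<epsilon> / 2) - real n * (\<epsilon> / 2)"
    by (simp add: algebra_simps)
  then have "(1 - \<epsilon>) * real n \<le> real (card (typical_residues P n \<delta>))"
    using card_typical_residues[OF assms(2) mu] squareful outliers by linarith
  then show ?thesis using P mu \<open>P \<noteq> {}\<close> unfolding n_def by blast
qed


subsection \<open>Products modulo a prime-power multiple\<close>

lemma multiplicity_eq_if_mod_eq:
  fixes p n a b m :: nat
  assumes "prime p" "p ^ m dvd n" "a \<noteq> 0" "b \<noteq> 0"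
    and "multiplicity p a < m" "multiplicity p b < m" "a mod n = b mod n"
  shows "multiplicity p a = multiplicity p b"
proof -
  have le: "multiplicity p x \<le> multiplicity p y"
    if "y \<noteq> 0" "multiplicity p x < m" "x mod n = y mod n" for x y
  proof -
    have "p ^ multiplicity p x dvd n"
      using assms(2) that(2) by (meson dvd_trans le_imp_power_dvd less_imp_le)
    then have "p ^ multiplicity p x dvd y"
      using multiplicity_dvd[of p x] that(3) by (metis dvd_mod_iff)
    moreover have "\<not> is_unit p" using assms(1) by auto
    ultimately show ?thesis using that(1) power_dvd_iff_le_multiplicity by blast
  qed
  show ?thesis using le[of b a] le[of a b] assms by simp
qed

lemma multiplicity_prod_list:
  fixes p :: nat and xs :: "nat list"
  assumes "prime p" "\<forall>a\<in>set xs. a \<noteq> 0 \<and> \<not> p^2 dvd a"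
  shows "multiplicity p (prod_list xs) = (\<Sum>a\<leftarrow>xs. if p dvd a then 1 else 0)"
  using assms(2)
proof (induction xs)
  case (Cons a xs)
  have "\<not> is_unit p" using assms(1) by auto
  then have "multiplicity p a = (if p dvd a then 1 else 0)"
    using Cons.prems power_dvd_iff_le_multiplicity[of a p 2] power_dvd_iff_le_multiplicity[of a p 1]
    by (auto simp: not_le)
  moreover have "a \<noteq> 0" "prod_list xs \<noteq> 0" using Cons.prems by (auto simp: prod_list_zero_iff)
  ultimately show ?case using Cons assms(1) by (simp add: prime_elem_multiplicity_mult_distrib)
qed simp

lemma sum_multiplicities_prod_list:
  fixes P :: "nat set" and xs :: "nat list"
  assumes "\<forall>p\<in>P. prime p" "\<forall>a\<in>set xs. a \<noteq> 0 \<and> (\<forall>p\<in>P. \<not> p^2 dvd a)"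
  shows "(\<Sum>p\<in>P. real (multiplicity p (prod_list xs))) = (\<Sum>a\<leftarrow>xs. prime_divisor_count P a)"
proof -
  have "(\<Sum>p\<in>P. real (multiplicity p (prod_list xs)))
      = (\<Sum>p\<in>P. real (\<Sum>a\<leftarrow>xs. if p dvd a then 1 else 0))"
    using assms by (intro sum.cong refl) (simp add: multiplicity_prod_list)
  also have "\<dots> = (\<Sum>a\<leftarrow>xs. prime_divisor_count P a)"
    unfolding prime_divisor_count_def by (induction xs) (auto simp: sum.distrib intro: sum.cong)
  finally show ?thesis .
qed

lemma product_free_if_counts_separated:
  fixes P S :: "nat set" and n m k j :: nat and lo hi :: real
  assumes P: "P \<noteq> {}" "\<forall>p\<in>P. prime p" "\<forall>p\<in>P. p ^ m dvd n"
    and S: "\<forall>x\<in>S. (\<forall>p\<in>P. \<not> p^2 dvd x) \<and> lo \<le> prime_divisor_count P x \<and> prime_divisor_count P x \<le> hi"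
    and "k < m" "j < m" and sep: "real j * hi < real k * lo"
  shows "product_free n k j S"
  unfolding product_free_def
proof (intro allI impI notI)
  fix as bs :: "nat list"
  assume len: "length as = k" "length bs = j" and sub: "set as \<subseteq> S" "set bs \<subseteq> S"
    and eq: "prod_list as mod n = prod_list bs mod n"
  have nonzero: "x \<noteq> 0" if "x \<in> S" for x
    using P(1) S that by fastforce
  have factors: "\<forall>a\<in>set xs. a \<noteq> 0 \<and> (\<forall>p\<in>P. \<not> p^2 dvd a)" if "set xs \<subseteq> S" for xs
    using that nonzero S by blast
  have small: "multiplicity p (prod_list xs) < m" if "set xs \<subseteq> S" "length xs < m" "p \<in> P" for xs p
  proof -
    have "(\<Sum>a\<leftarrow>xs. if p dvd a then 1 else 0) \<le> (\<Sum>a\<leftarrow>xs. 1::nat)"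
      by (rule sum_list_mono) simp
    then show ?thesis using that factors[OF that(1)] P(2)
      by (simp add: multiplicity_prod_list sum_list_triv)
  qed
  have "multiplicity p (prod_list as) = multiplicity p (prod_list bs)" if "p \<in> P" for p
    using that P small[OF sub(1)] small[OF sub(2)] len assms(5,6) eq factors[OF sub(1)] factors[OF sub(2)]
    by (intro multiplicity_eq_if_mod_eq) (auto simp: prod_list_zero_iff)
  then have "(\<Sum>a\<leftarrow>as. prime_divisor_count P a) = (\<Sum>b\<leftarrow>bs. prime_divisor_count P b)"
    using sum_multiplicities_prod_list[OF P(2) factors[OF sub(1)]]
      sum_multiplicities_prod_list[OF P(2) factors[OF sub(2)]] by simp
  moreover have "real k * lo \<le> (\<Sum>a\<leftarrow>as. prime_divisor_count P a)"
    using sum_list_mono[of as "\<lambda>_. lo"] sub(1) S len(1) by (auto simp: sum_list_triv)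
  moreover have "(\<Sum>b\<leftarrow>bs. prime_divisor_count P b) \<le> real j * hi"
    using sum_list_mono[of bs _ "\<lambda>_. hi"] sub(2) S len(2) by (auto simp: sum_list_triv)
  ultimately show False using sep by linarith
qed

lemma window_separation:
  fixes m k j :: nat and \<mu> :: real
  assumes "j < k" "k + j \<le> m" "\<mu> > 0"
  shows "real j * ((1 + 1 / (2 * real m + 2)) * \<mu>) < real k * ((1 - 1 / (2 * real m + 2)) * \<mu>)"
proof -
  have "(real k + real j) / (2 * real m + 2) < 1"
    using assms(2) by (simp add: field_simps)
  then have "0 < real k - real j - (real k + real j) / (2 * real m + 2)"
    using assms(1) by linarith
  then have "0 < (real k - real j - (real k + real j) / (2 * real m + 2)) * \<mu>"
    using assms(3) by simp
  then show ?thesis by (simp add: algebra_simps add_divide_distrib)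
qed


theorem theorem3p1:
  fixes \<epsilon> :: real and m :: nat
  assumes "\<epsilon> > 0" and "m \<ge> 3"
  shows "\<exists>n::nat. n > 0 \<and> (\<exists>S. S \<subseteq> {0..<n} \<and> real (card S) \<ge> (1 - \<epsilon>) * real n \<and>
           (\<forall>k j. 0 < j \<and> j < k \<and> k + j \<le> m \<longrightarrow> product_free n k j S))"
proof -
  define \<delta> :: real where "\<delta> = 1 / (2 * real m + 2)"
  obtain P where P: "finite P" "P \<noteq> {}" "\<forall>p\<in>P. prime p" and mu: "reciprocal_sum P > 0"
    and dense: "(1 - \<epsilon>) * real (\<Prod>p\<in>P. p ^ m) \<le> real (card (typical_residues P (\<Prod>p\<in>P. p ^ m) \<delta>))"
    using exists_dense_typical_residues[of \<epsilon> \<delta> m] assms by (auto simp: \<delta>_def)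
  define n where "n = (\<Prod>p\<in>P. p ^ m)"
  define S where "S = typical_residues P n \<delta>"
  have "n > 0" using P by (simp add: n_def prime_gt_0_nat prod_pos)
  have "p ^ m dvd n" if "p \<in> P" for p unfolding n_def by (rule dvd_prodI[OF P(1) that])
  then have "product_free n k j S" if "0 < j \<and> j < k \<and> k + j \<le> m" for k j
    using P that window_separation[of j k m "reciprocal_sum P"] mu
    by (intro product_free_if_counts_separated[where lo = "(1 - \<delta>) * reciprocal_sum P"
          and hi = "(1 + \<delta>) * reciprocal_sum P"])
       (auto simp: S_def typical_residues_def \<delta>_def abs_le_iff algebra_simps)
  moreover have "S \<subseteq> {0..<n}" by (auto simp: S_def typical_residues_def)
  ultimately show ?thesis using \<open>n > 0\<close> dense unfolding S_def n_def by blast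
qed

end
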